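(* Assume $d\ge1$. An LR triple $A,B,C$ over $\mathbb F$ of diameter $d$ is uniquely determined up to isomorphism by its parameter array together with any one of the following twelve scalars: $$a_0,a'_0,a''_0;\quad a_d,a'_d,a''_d;\quad \alpha_1,\alpha'_1,\alpha''_1;\quad \beta_1,\beta'_1,\beta''_1.$$ That is, two such LR triples with the same parameter array and the same value of one chosen scalar from this list are isomorphic.
   Context: Let $V$ be a vector space over a field $\mathbb F$ with $\dim V=d+1$. A decomposition of $V$ is a sequence $(V_i)_{i=0}^d$ of one-dimensional subspaces with $V=\bigoplus V_i$; $X$ lowers it if $XV_i=V_{i-1}$ ($1\le i\le d$), $XV_0=0$; raises it if $XV_i=V_{i+1}$ ($0\le i\le d-1$), $XV_d=0$. An ordered pair $X,Y\in\mathrm{End}(V)$ is an LR pair if some decomposition (unique, the $(X,Y)$-decomposition) is lowered by $X$ and raised by $Y$; the nonzero eigenvalue of $YX$ on the $i$-th component ($1\le i\le d$) gives the parameter sequence. An LR triple is $A,B,C$ with $A,B$; $B,C$; $C,A$ LR pairs; its parameter array is the triple of parameter sequences of $A,B$; $B,C$; $C,A$. With $E_i,E'_i,E''_i$ the projections onto the $i$-th components of the $(A,B)$-, $(B,C)$-, $(C,A)$-decompositions, $a_i=\mathrm{tr}(CE_i)$, $a'_i=\mathrm{tr}(AE'_i)$, $a''_i=\mathrm{tr}(BE''_i)$. An $(X,Y)$-basis is a basis $(v_i)$ with $v_i$ in the $i$-th component of the $(X,Y)$-decomposition and $Xv_i=v_{i-1}$ ($1\le i\le d$). An upper triangular Toeplitz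 matrix with parameters $(\gamma_i)_{i=0}^d$ has $(i,k)$-entry $\gamma_{k-i}$ for $i\le k$ and $0$ otherwise. Two bases are compatible if the transition matrix between them is upper triangular Toeplitz with diagonal entries $1$. The transition matrix from a $(C,B)$-basis to a compatible $(C,A)$-basis (resp. from an $(A,C)$-basis to a compatible $(A,B)$-basis; from a $(B,A)$-basis to a compatible $(B,C)$-basis) exists and is independent of choices; its parameters are $(\alpha_i)$ (resp. $(\alpha'_i)$; $(\alpha''_i)$), and the parameters of its inverse are $(\beta_i)$ (resp. $(\beta'_i)$; $(\beta''_i)$). Isomorphism of LR triples: a linear bijection intertwining $A,B,C$ with $A',B',C'$. *)

theory Defs
  imports "HOL-Analysis.Analysis"
begin

text \<open>The vector space V of dimension d+1 is realised as 'a^'n with CARD('n) = d+1;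
  End(V) is realised as the matrices 'a^'n^'n acting by (*v).
  A sequence (V_i)_{i=0}^d of subspaces is a function nat => set, with the
  convention V_i = {0} for i > d.\<close>

definition is_decomp :: "nat \<Rightarrow> (nat \<Rightarrow> ('a::field^'n) set) \<Rightarrow> bool" where
  "is_decomp d Vs \<longleftrightarrow>
     (\<forall>i\<le>d. vec.subspace (Vs i) \<and> vec.dim (Vs i) = 1) \<and>
     (\<forall>i>d. Vs i = {0}) \<and>
     (\<forall>v::'a^'n. \<exists>!u. (\<forall>i\<le>d. u i \<in> Vs i) \<and> (\<forall>i>d. u i = 0) \<and> v = (\<Sum>i\<le>d. u i))"

definition lowers :: "nat \<Rightarrow> ('a::field^'n^'n) \<Rightarrow> (nat \<Rightarrow> ('a^'n) set) \<Rightarrow> bool" where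
  "lowers d X Vs \<longleftrightarrow> (\<forall>i. 1 \<le> i \<and> i \<le> d \<longrightarrow> (\<lambda>v. X *v v) ` Vs i = Vs (i - 1))
      \<and> (\<lambda>v. X *v v) ` Vs 0 = {0}"

definition raises :: "nat \<Rightarrow> ('a::field^'n^'n) \<Rightarrow> (nat \<Rightarrow> ('a^'n) set) \<Rightarrow> bool" where
  "raises d X Vs \<longleftrightarrow> (\<forall>i<d. (\<lambda>v. X *v v) ` Vs i = Vs (Suc i))
      \<and> (\<lambda>v. X *v v) ` Vs d = {0}"

definition lr_pair :: "nat \<Rightarrow> ('a::field^'n^'n) \<Rightarrow> ('a^'n^'n) \<Rightarrow> bool" where
  "lr_pair d X Y \<longleftrightarrow> (\<exists>Vs. is_decomp d Vs \<and> lowers d X Vs \<and> raises d Y Vs)"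

definition lr_decomp :: "nat \<Rightarrow> ('a::field^'n^'n) \<Rightarrow> ('a^'n^'n) \<Rightarrow> nat \<Rightarrow> ('a^'n) set" where
  "lr_decomp d X Y = (THE Vs. is_decomp d Vs \<and> lowers d X Vs \<and> raises d Y Vs)"

definition lr_param :: "nat \<Rightarrow> ('a::field^'n^'n) \<Rightarrow> ('a^'n^'n) \<Rightarrow> nat \<Rightarrow> 'a" where
  "lr_param d X Y i = (THE \<phi>. \<forall>v \<in> lr_decomp d X Y i. (Y ** X) *v v = \<phi> *s v)"

definition lr_triple :: "nat \<Rightarrow> ('a::field^'n^'n) \<Rightarrow> ('a^'n^'n) \<Rightarrow> ('a^'n^'n) \<Rightarrow> bool" where
  "lr_triple d A B C \<longleftrightarrow> lr_pair d A B \<and> lr_pair d B C \<and> lr_pair d C A"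

definition same_param_array ::
  "nat \<Rightarrow> ('a::field^'n^'n) \<Rightarrow> ('a^'n^'n) \<Rightarrow> ('a^'n^'n) \<Rightarrow> ('a^'n^'n) \<Rightarrow> ('a^'n^'n) \<Rightarrow> ('a^'n^'n) \<Rightarrow> bool" where
  "same_param_array d A B C A' B' C' \<longleftrightarrow>
     (\<forall>i. 1 \<le> i \<and> i \<le> d \<longrightarrow>
        lr_param d A B i = lr_param d A' B' i \<and>
        lr_param d B C i = lr_param d B' C' i \<and>
        lr_param d C A i = lr_param d C' A' i)"

definition decomp_component :: "nat \<Rightarrow> (nat \<Rightarrow> ('a::field^'n) set) \<Rightarrow> nat \<Rightarrow> 'a^'n \<Rightarrow> 'a^'n" where
  "decomp_component d Vs i v =
     (THE u. (\<forall>j\<le>d. u j \<in> Vs j) \<and> (\<forall>j>d. u j = 0) \<and> v = (\<Sum>j\<le>d. u j)) i"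

definition decomp_proj :: "nat \<Rightarrow> (nat \<Rightarrow> ('a::field^'n) set) \<Rightarrow> nat \<Rightarrow> 'a^'n^'n" where
  "decomp_proj d Vs i = matrix (decomp_component d Vs i)"

definition a_seq :: "nat \<Rightarrow> ('a::field^'n^'n) \<Rightarrow> ('a^'n^'n) \<Rightarrow> ('a^'n^'n) \<Rightarrow> nat \<Rightarrow> 'a" where
  "a_seq d A B C i = trace (C ** decomp_proj d (lr_decomp d A B) i)"

definition a'_seq :: "nat \<Rightarrow> ('a::field^'n^'n) \<Rightarrow> ('a^'n^'n) \<Rightarrow> ('a^'n^'n) \<Rightarrow> nat \<Rightarrow> 'a" where
  "a'_seq d A B C i = trace (A ** decomp_proj d (lr_decomp d B C) i)"

definition a''_seq :: "nat \<Rightarrow> ('a::field^'n^'n) \<Rightarrow> ('a^'n^'n) \<Rightarrow> ('a^'n^'n) \<Rightarrow> nat \<Rightarrow> 'a" where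
  "a''_seq d A B C i = trace (B ** decomp_proj d (lr_decomp d C A) i)"

definition lr_basis :: "nat \<Rightarrow> ('a::field^'n^'n) \<Rightarrow> ('a^'n^'n) \<Rightarrow> (nat \<Rightarrow> 'a^'n) \<Rightarrow> bool" where
  "lr_basis d X Y v \<longleftrightarrow>
     inj_on v {..d} \<and> vec.independent (v ` {..d}) \<and> vec.span (v ` {..d}) = UNIV \<and>
     (\<forall>i\<le>d. v i \<in> lr_decomp d X Y i) \<and>
     (\<forall>i. 1 \<le> i \<and> i \<le> d \<longrightarrow> X *v v i = v (i - 1))"

text \<open>The transition matrix from basis u to basis w is upper triangular Toeplitz with
  parameters gamma_0 = 1, gamma_1, ..., gamma_d, i.e. w_k = sum_{i<=k} gamma_{k-i} u_i
  (column k of the transition matrix holds the coordinates of w_k in the basis u).\<close>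
definition toeplitz_transition :: "nat \<Rightarrow> (nat \<Rightarrow> 'a::field^'n) \<Rightarrow> (nat \<Rightarrow> 'a^'n) \<Rightarrow> (nat \<Rightarrow> 'a) \<Rightarrow> bool" where
  "toeplitz_transition d u w \<gamma> \<longleftrightarrow> \<gamma> 0 = 1 \<and> (\<forall>i>d. \<gamma> i = 0) \<and>
     (\<forall>k\<le>d. w k = (\<Sum>i\<le>k. \<gamma> (k - i) *s u i))"

definition trans_params :: "nat \<Rightarrow> ('a::field^'n^'n) \<Rightarrow> ('a^'n^'n) \<Rightarrow> ('a^'n^'n) \<Rightarrow> nat \<Rightarrow> 'a" where
  "trans_params d X Y Z = (THE \<gamma>. \<exists>u w. lr_basis d X Y u \<and> lr_basis d X Z w \<and> toeplitz_transition d u w \<gamma>)"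

text \<open>alpha: (C,B)-basis to (C,A)-basis; beta: parameters of the inverse, i.e. of the
  transition from the (C,A)-basis back to the compatible (C,B)-basis. Similarly for the primed ones.\<close>
definition alpha :: "nat \<Rightarrow> ('a::field^'n^'n) \<Rightarrow> ('a^'n^'n) \<Rightarrow> ('a^'n^'n) \<Rightarrow> nat \<Rightarrow> 'a" where
  "alpha d A B C = trans_params d C B A"
definition beta :: "nat \<Rightarrow> ('a::field^'n^'n) \<Rightarrow> ('a^'n^'n) \<Rightarrow> ('a^'n^'n) \<Rightarrow> nat \<Rightarrow> 'a" where
  "beta d A B C = trans_params d C A B"
definition alpha' :: "nat \<Rightarrow> ('a::field^'n^'n) \<Rightarrow> ('a^'n^'n) \<Rightarrow> ('a^'n^'n) \<Rightarrow> nat \<Rightarrow> 'a" where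
  "alpha' d A B C = trans_params d A C B"
definition beta' :: "nat \<Rightarrow> ('a::field^'n^'n) \<Rightarrow> ('a^'n^'n) \<Rightarrow> ('a^'n^'n) \<Rightarrow> nat \<Rightarrow> 'a" where
  "beta' d A B C = trans_params d A B C"
definition alpha'' :: "nat \<Rightarrow> ('a::field^'n^'n) \<Rightarrow> ('a^'n^'n) \<Rightarrow> ('a^'n^'n) \<Rightarrow> nat \<Rightarrow> 'a" where
  "alpha'' d A B C = trans_params d B A C"
definition beta'' :: "nat \<Rightarrow> ('a::field^'n^'n) \<Rightarrow> ('a^'n^'n) \<Rightarrow> ('a^'n^'n) \<Rightarrow> nat \<Rightarrow> 'a" where
  "beta'' d A B C = trans_params d B C A"

definition lr_triple_iso :: "('a::field^'n^'n) \<Rightarrow> ('a^'n^'n) \<Rightarrow> ('a^'n^'n) \<Rightarrow> ('a^'n^'n) \<Rightarrow> ('a^'n^'n) \<Rightarrow> ('a^'n^'n) \<Rightarrow> bool" where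
  "lr_triple_iso A B C A' B' C' \<longleftrightarrow>
     (\<exists>P. invertible P \<and> P ** A = A' ** P \<and> P ** B = B' ** P \<and> P ** C = C' ** P)"

end

theory Submission
  imports Defs
begin

text \<open>Fix an \<open>(A,B)\<close>-basis \<open>u\<close>. Then \<open>A\<close> and \<open>B\<close> act on \<open>u\<close> as the shift and the weighted
  shift given by the parameters of \<open>(A,B)\<close>. The compatible \<open>(A,C)\<close>-basis \<open>w\<close> is the Toeplitz transform
  of \<open>u\<close> with coefficients \<open>\<gamma>\<close>; expressing \<open>C w(k) = \<psi>(k+1) w(k+1)\<close> in the basis \<open>u\<close> and
  using the flags \<open>ker A\<^sup>m\<close> and \<open>ker B\<^sup>m\<close> shows that \<open>C\<close> is tridiagonal in \<open>u\<close>: its superdiagonal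
  consists of the \<open>(A,C)\<close>-parameters \<open>\<psi>\<close>, its diagonal of the numbers \<open>\<gamma>\<^sub>1 (\<psi>(k+1) - \<psi>(k))\<close>, and
  its subdiagonal (computed via the \<open>(B,C)\<close>-flag) of quotients of \<open>(B,C)\<close>- and \<open>(A,B)\<close>-parameters.
  Since \<open>\<psi>\<close> is the reversed \<open>(C,A)\<close>-sequence, the parameter array together with \<open>\<gamma>\<^sub>1\<close> fixes the
  matrices of \<open>A\<close>, \<open>B\<close>, \<open>C\<close>, hence the triple up to isomorphism. Finally \<open>a\<^sub>0 = \<gamma>\<^sub>1 \<psi>\<^sub>1\<close>,
  \<open>a\<^sub>d = -\<gamma>\<^sub>1 \<psi>\<^sub>d\<close>, \<open>\<beta>'\<^sub>1 = \<gamma>\<^sub>1\<close> and \<open>\<alpha>'\<^sub>1 = -\<gamma>\<^sub>1\<close> each determine \<open>\<gamma>\<^sub>1\<close>; the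
  remaining eight scalars are the same four for the rotated triples \<open>B, C, A\<close> and \<open>C, A, B\<close>.\<close>

lemma dim1_eq_span_singleton:
  fixes S :: "('a::field^'n) set"
  assumes "vec.subspace S" "vec.dim S = 1" "v \<in> S" "v \<noteq> 0"
  shows "S = vec.span {v}"
proof -
  have "vec.span {v} \<subseteq> S" using assms by (simp add: vec.span_minimal)
  moreover have "vec.dim (vec.span {v}) \<ge> vec.dim S" using assms by simp
  ultimately show ?thesis using vec.subspace_dim_equal[of "vec.span {v}" S] assms by auto
qed

lemma dim1_ex_nonzero:
  fixes S :: "('a::field^'n) set"
  assumes "vec.dim S = 1"
  obtains v where "v \<in> S" "v \<noteq> 0"
proof -
  have "\<not> S \<subseteq> {0}"
  proof
    assume "S \<subseteq> {0}"
    then have "vec.dim S = 0" by simp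
    with assms show False by simp
  qed
  then show thesis using that by blast
qed

lemma in_span_singleton_iff: "x \<in> vec.span {v} \<longleftrightarrow> (\<exists>c. x = c *s (v::'a::field^'n))"
  by (auto simp: vec.span_singleton)

lemma image_span_singleton: "(\<lambda>x. (X::'a::field^'n^'n) *v x) ` vec.span {v} = vec.span {X *v v}"
proof -
  have "(\<lambda>x. X *v x) ` range (\<lambda>k. k *s v) = range (\<lambda>k. k *s (X *v v))"
    by (auto simp: vector_scalar_commute image_iff)
  then show ?thesis by (simp add: vec.span_singleton)
qed

lemma mv_nonzero_of_image_dim1:
  fixes X :: "'a::field^'n^'n"
  assumes "vec.subspace S" "vec.dim S = 1" "v \<in> S" "v \<noteq> 0"
    and "(\<lambda>x. X *v x) ` S = T" "vec.dim T = 1"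
  shows "X *v v \<noteq> 0"
proof
  assume "X *v v = 0"
  moreover have "T = vec.span {X *v v}"
    using dim1_eq_span_singleton[OF assms(1-4)] assms(5) image_span_singleton[of X v] by simp
  ultimately have "T = {0}" by simp
  then show False using assms(6) by simp
qed

lemma sum_delta_scale:
  fixes f :: "nat \<Rightarrow> 'a::field^'n"
  assumes "finite S" "j \<in> S"
  shows "(\<Sum>k\<in>S. (if k = j then 1 else 0) *s f k) = f j"
proof -
  have "(\<Sum>k\<in>S. (if k = j then 1 else 0) *s f k) = (\<Sum>k\<in>S. if k = j then f k else 0)"
    by (rule sum.cong) auto
  also have "\<dots> = f j" using assms by (simp add: sum.delta)
  finally show ?thesis .
qed

lemma sum_atMost_eq_last:
  fixes f :: "nat \<Rightarrow> 'b::comm_monoid_add"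
  assumes "\<And>j. j < d \<Longrightarrow> f j = 0"
  shows "(\<Sum>j\<le>d. f j) = f d"
proof -
  have "(\<Sum>j\<le>d. f j) = (\<Sum>j\<in>{d}. f j)"
    by (rule sum.mono_neutral_right) (use assms in auto)
  then show ?thesis by simp
qed

lemma sum_atMost_if_le:
  fixes f :: "nat \<Rightarrow> 'b::comm_monoid_add"
  assumes "k \<le> d"
  shows "(\<Sum>i\<le>d. if i \<le> k then f i else 0) = (\<Sum>i\<le>k. f i)"
proof -
  have "(\<Sum>i\<le>d. if i \<le> k then f i else 0) = (\<Sum>i\<in>{..d} \<inter> {i. i \<le> k}. f i)"
    by (simp add: sum.inter_restrict)
  also have "{..d} \<inter> {i. i \<le> k} = {..k}" using assms by auto
  finally show ?thesis by simp
qed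

lemma sum_atMost_reflect: "(\<Sum>i\<le>d. f (d - i)) = (\<Sum>i\<le>(d::nat). (f i :: 'b::comm_monoid_add))"
  by (rule sum.reindex_bij_witness[where i="\<lambda>i. d - i" and j="\<lambda>i. d - i"]) auto

abbreviation mv_pow :: "'a::field^'n^'n \<Rightarrow> nat \<Rightarrow> 'a^'n \<Rightarrow> 'a^'n" where
  "mv_pow X n \<equiv> ((*v) X) ^^ n"

lemma mv_pow_add: "mv_pow X n (x + y) = mv_pow X n x + mv_pow X n y"
  by (induction n) (auto simp: matrix_vector_right_distrib)

lemma mv_pow_scale: "mv_pow X n (c *s x) = c *s mv_pow X n x"
  by (induction n) (auto simp: vector_scalar_commute)

lemma mv_pow_zero: "mv_pow X n 0 = 0"
  by (induction n) auto

lemma mv_pow_sum: "finite S \<Longrightarrow> mv_pow X n (\<Sum>j\<in>S. f j) = (\<Sum>j\<in>S. mv_pow X n (f j))"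
  by (induction S rule: finite_induct) (auto simp: mv_pow_add mv_pow_zero)

lemma mv_pow_Suc_right: "mv_pow X (Suc n) x = mv_pow X n (X *v x)"
  by (simp add: funpow_Suc_right del: funpow.simps)

section \<open>Coordinates with respect to a basis indexed by \<open>{..d}\<close>\<close>

definition coord :: "nat \<Rightarrow> (nat \<Rightarrow> 'a::field^'n) \<Rightarrow> 'a^'n \<Rightarrow> nat \<Rightarrow> 'a" where
  "coord d v x = (SOME c. (\<forall>i>d. c i = 0) \<and> x = (\<Sum>i\<le>d. c i *s v i))"

locale indexed_basis =
  fixes d :: nat and v :: "nat \<Rightarrow> 'a::field^'n"
  assumes independent: "(\<Sum>i\<le>d. c i *s v i) = 0 \<Longrightarrow> i \<le> d \<Longrightarrow> c i = 0"
    and spanning: "\<exists>c. x = (\<Sum>i\<le>d. c i *s v i)"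
begin

lemma coord_spec: "(\<forall>i>d. coord d v x i = 0) \<and> x = (\<Sum>i\<le>d. coord d v x i *s v i)"
proof -
  obtain c where c: "x = (\<Sum>i\<le>d. c i *s v i)" using spanning by blast
  let ?c = "\<lambda>i. if i \<le> d then c i else 0"
  have "(\<forall>i>d. ?c i = 0) \<and> x = (\<Sum>i\<le>d. ?c i *s v i)" using c by auto
  then show ?thesis
    unfolding coord_def by (rule someI[where P="\<lambda>c. (\<forall>i>d. c i = 0) \<and> x = (\<Sum>i\<le>d. c i *s v i)"])
qed

lemma coord_high: "d < i \<Longrightarrow> coord d v x i = 0"
  using coord_spec by blast

lemma coord_expand: "x = (\<Sum>i\<le>d. coord d v x i *s v i)"
  using coord_spec by blast

lemma coord_unique:
  assumes "x = (\<Sum>i\<le>d. c i *s v i)" "i \<le> d"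
  shows "coord d v x i = c i"
proof -
  have "(\<Sum>i\<le>d. (coord d v x i - c i) *s v i)
      = (\<Sum>i\<le>d. coord d v x i *s v i) - (\<Sum>i\<le>d. c i *s v i)"
    by (simp add: vec.scale_left_diff_distrib sum_subtractf)
  also have "\<dots> = 0" by (simp only: coord_expand[symmetric] assms(1)[symmetric]) simp
  finally have "(\<Sum>i\<le>d. (coord d v x i - c i) *s v i) = 0" .
  from independent[OF this assms(2)] show ?thesis by simp
qed

lemma basis_nonzero: "i \<le> d \<Longrightarrow> v i \<noteq> 0"
  using independent[of "\<lambda>j. if j = i then 1 else 0" i] by (auto simp: sum_delta_scale)

lemma coord_of_basis: "i \<le> d \<Longrightarrow> j \<le> d \<Longrightarrow> coord d v (v j) i = (if i = j then 1 else 0)"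
  using coord_unique[of "v j" "\<lambda>k. if k = j then 1 else 0" i] by (simp add: sum_delta_scale)

lemma coord_add: "coord d v (x + y) i = coord d v x i + coord d v y i"
proof (cases "i \<le> d")
  case True
  have "x + y = (\<Sum>i\<le>d. (coord d v x i + coord d v y i) *s v i)"
    by (subst (1 2) coord_expand) (simp add: vec.scale_left_distrib sum.distrib)
  from coord_unique[OF this True] show ?thesis .
qed (simp add: coord_high)

lemma coord_scale: "coord d v (a *s x) i = a * coord d v x i"
proof (cases "i \<le> d")
  case True
  have "a *s x = (\<Sum>i\<le>d. (a * coord d v x i) *s v i)"
    by (subst coord_expand) (simp add: vec.scale_sum_right)
  from coord_unique[OF this True] show ?thesis .
qed (simp add: coord_high)

lemma coord_zero: "coord d v 0 i = 0"
  using coord_scale[of 0 0 i] by simp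

lemma coord_diff: "coord d v (x - y) i = coord d v x i - coord d v y i"
  using coord_add[of "x - y" y i] by simp

lemma coord_sum: "finite S \<Longrightarrow> coord d v (\<Sum>j\<in>S. f j) i = (\<Sum>j\<in>S. coord d v (f j) i)"
  by (induction S rule: finite_induct) (auto simp: coord_zero coord_add)

lemma coord_eqI: "(\<And>i. i \<le> d \<Longrightarrow> coord d v x i = coord d v y i) \<Longrightarrow> x = y"
  by (subst (1 2) coord_expand) (auto intro: sum.cong)

lemma mv_expand: "M *v x = (\<Sum>i\<le>d. coord d v x i *s (M *v v i))"
  by (subst coord_expand) (simp add: vec.sum vector_scalar_commute)

lemma matrix_eqI: "(\<And>k. k \<le> d \<Longrightarrow> M *v v k = N *v v k) \<Longrightarrow> M = N"
  unfolding matrix_eq by (subst (1 2) mv_expand) (auto intro: sum.cong)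

end

section \<open>Bases lowered and raised by a matrix\<close>

locale lowering_chain = indexed_basis d v for d and v :: "nat \<Rightarrow> 'a::field^'n" +
  fixes X :: "'a^'n^'n"
  assumes lower_step: "\<And>i. 1 \<le> i \<Longrightarrow> i \<le> d \<Longrightarrow> X *v v i = v (i - 1)"
    and lower_bottom: "X *v v 0 = 0"
begin

lemma coord_lower_basis:
  "k \<le> d \<Longrightarrow> j \<le> d \<Longrightarrow> coord d v (X *v v k) j = (if 1 \<le> k \<and> Suc j = k then 1 else 0)"
  by (cases "k = 0") (auto simp: lower_bottom coord_zero lower_step coord_of_basis)

lemma coord_lower: "coord d v (X *v x) j = (if j < d then coord d v x (Suc j) else 0)"
proof (cases "j \<le> d")
  case True
  have "coord d v (X *v x) j = (\<Sum>i\<le>d. coord d v x i * coord d v (X *v v i) j)"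
    by (subst mv_expand) (simp add: coord_sum coord_scale)
  also have "\<dots> = (\<Sum>i\<le>d. if i = Suc j then coord d v x i else 0)"
    using True by (intro sum.cong) (auto simp: coord_lower_basis)
  also have "\<dots> = (if j < d then coord d v x (Suc j) else 0)"
    using True by (simp add: sum.delta)
  finally show ?thesis .
qed (simp add: coord_high)

lemma lower_pow_basis: "i \<le> d \<Longrightarrow> mv_pow X n (v i) = (if n \<le> i then v (i - n) else 0)"
proof (induction n)
  case (Suc n)
  consider "Suc n \<le> i" | "n = i" | "i < n" by linarith
  then show ?case
    using Suc lower_step[of "i - n"] by cases (auto simp: lower_bottom)
qed simp

lemma lower_pow_top: "k \<le> d \<Longrightarrow> mv_pow X (d - k) (v d) = v k"
  using lower_pow_basis[of d "d - k"] by simp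

lemma coord_lower_pow: "coord d v (mv_pow X n x) j = (if j + n \<le> d then coord d v x (j + n) else 0)"
  by (induction n arbitrary: j) (auto simp: coord_high coord_lower)

lemma coord_zero_of_lower_pow: "mv_pow X m x = 0 \<Longrightarrow> m \<le> j \<Longrightarrow> coord d v x j = 0"
  using coord_lower_pow[of m x "j - m"] by (cases "j \<le> d") (auto simp: coord_zero coord_high)

end

locale raising_chain = indexed_basis d v for d and v :: "nat \<Rightarrow> 'a::field^'n" +
  fixes Y :: "'a^'n^'n" and \<phi> :: "nat \<Rightarrow> 'a"
  assumes raise_step: "\<And>i. i < d \<Longrightarrow> Y *v v i = \<phi> (Suc i) *s v (Suc i)"
    and raise_top: "Y *v v d = 0"
    and param_nonzero: "\<And>i. 1 \<le> i \<Longrightarrow> i \<le> d \<Longrightarrow> \<phi> i \<noteq> 0"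
begin

lemma coord_raise_basis:
  "k \<le> d \<Longrightarrow> j \<le> d \<Longrightarrow> coord d v (Y *v v k) j = (if k < d \<and> j = Suc k then \<phi> (Suc k) else 0)"
  by (cases "k < d") (auto simp: raise_step raise_top coord_zero coord_scale coord_of_basis)

lemma coord_raise:
  assumes j: "j \<le> d"
  shows "coord d v (Y *v x) j = (if 1 \<le> j then \<phi> j * coord d v x (j - 1) else 0)"
proof -
  have "coord d v (Y *v x) j = (\<Sum>i\<le>d. coord d v x i * coord d v (Y *v v i) j)"
    by (subst mv_expand) (simp add: coord_sum coord_scale)
  also have "\<dots> = (\<Sum>i\<le>d. if i = j - 1 \<and> 1 \<le> j then \<phi> j * coord d v x i else 0)"
    using j by (intro sum.cong) (auto simp: coord_raise_basis)
  also have "\<dots> = (if 1 \<le> j then \<phi> j * coord d v x (j - 1) else 0)"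
    using j by (cases "1 \<le> j") (simp_all add: sum.delta)
  finally show ?thesis .
qed

lemma coord_zero_of_raise_pow: "mv_pow Y m x = 0 \<Longrightarrow> j + m \<le> d \<Longrightarrow> coord d v x j = 0"
proof (induction m arbitrary: x j)
  case (Suc m)
  have "mv_pow Y m (Y *v x) = 0" using Suc.prems(1) by (simp add: mv_pow_Suc_right del: funpow.simps)
  then have "coord d v (Y *v x) (Suc j) = 0" using Suc.IH Suc.prems(2) by simp
  then show ?case using Suc.prems(2) param_nonzero[of "Suc j"] by (simp add: coord_raise)
qed (simp add: coord_zero)

lemma raise_pow_basis_eq_0: "i \<le> d \<Longrightarrow> d < i + n \<Longrightarrow> mv_pow Y n (v i) = 0"
proof (induction n arbitrary: i)
  case (Suc n)
  show ?case
  proof (cases "i < d")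
    case True
    then show ?thesis using Suc.IH[of "Suc i"] Suc.prems
      by (simp add: mv_pow_Suc_right raise_step mv_pow_scale del: funpow.simps)
  qed (use Suc.prems in \<open>simp add: mv_pow_Suc_right raise_top mv_pow_zero del: funpow.simps\<close>)
qed simp

lemma coord_raise_pow_low: "j < n \<Longrightarrow> coord d v (mv_pow Y n x) j = 0"
proof (induction n arbitrary: j)
  case (Suc n)
  then show ?case by (cases "j \<le> d") (auto simp: coord_raise coord_high)
qed simp

lemma raise_pow_bottom:
  "n \<le> d \<Longrightarrow> mv_pow Y n (v 0) = (\<Prod>i\<in>{1..n}. \<phi> i) *s v n"
proof (induction n)
  case (Suc n)
  then show ?case by (simp add: raise_step vector_scalar_commute mult.commute)
qed simp

lemma raise_pow_bottom_nonzero: "n \<le> d \<Longrightarrow> mv_pow Y n (v 0) \<noteq> 0"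
  using raise_pow_bottom basis_nonzero param_nonzero by simp

end

locale lr_chain = lowering_chain d v X + raising_chain d v Y \<phi> for d v X Y \<phi>
begin

lemma lower_raise_basis: "j \<le> d \<Longrightarrow> X *v (Y *v v j) = (if Suc j \<le> d then \<phi> (Suc j) else 0) *s v j"
  by (cases "j < d") (auto simp: raise_step raise_top vector_scalar_commute lower_step[of "Suc j"])

lemma lower_pow_raise_eq_0:
  assumes "mv_pow X m x = 0"
  shows "mv_pow X (Suc m) (Y *v x) = 0"
proof -
  have vanish: "coord d v x j *s mv_pow X (Suc m) (Y *v v j) = 0" if j: "j \<le> d" for j
  proof (cases "m \<le> j")
    case True then show ?thesis using coord_zero_of_lower_pow[OF assms] by simp
  next
    case False
    then show ?thesis using j lower_pow_basis[of "Suc j" "Suc m"]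
      by (cases "j < d") (auto simp: raise_step raise_top mv_pow_scale mv_pow_zero simp del: funpow.simps)
  qed
  have "mv_pow X (Suc m) (Y *v x) = (\<Sum>j\<le>d. coord d v x j *s mv_pow X (Suc m) (Y *v v j))"
    by (subst mv_expand) (simp add: mv_pow_sum mv_pow_scale del: funpow.simps)
  also have "\<dots> = 0" using vanish by (intro sum.neutral) auto
  finally show ?thesis .
qed

lemma lower_pow_eigen:
  assumes m: "m \<le> d" and cz: "\<And>j. m < j \<Longrightarrow> coord d v x j = 0"
  shows "mv_pow X m (X *v (Y *v x) - (if Suc m \<le> d then \<phi> (Suc m) else 0) *s x) = 0"
proof -
  define \<psi> where "\<psi> = (\<lambda>s. if s \<le> d then \<phi> s else 0)"
  have expansion: "X *v (Y *v x) - \<psi> (Suc m) *s x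
      = (\<Sum>j\<le>d. (coord d v x j * (\<psi> (Suc j) - \<psi> (Suc m))) *s v j)"
  proof -
    have "X *v (Y *v x) = (\<Sum>j\<le>d. (coord d v x j * \<psi> (Suc j)) *s v j)"
      by (subst coord_expand) (auto intro: sum.cong simp: vec.sum vector_scalar_commute lower_raise_basis \<psi>_def)
    moreover have "\<psi> (Suc m) *s x = (\<Sum>j\<le>d. (coord d v x j * \<psi> (Suc m)) *s v j)"
      by (subst coord_expand) (simp add: vec.scale_sum_right mult.commute)
    ultimately show ?thesis
      by (simp add: right_diff_distrib vec.scale_left_diff_distrib sum_subtractf)
  qed
  have vanish: "(coord d v x j * (\<psi> (Suc j) - \<psi> (Suc m))) *s mv_pow X m (v j) = 0" if "j \<le> d" for j
    using that cz[of j] lower_pow_basis[of j m] by (cases "m < j") auto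
  have "mv_pow X m (X *v (Y *v x) - \<psi> (Suc m) *s x) = 0"
    unfolding expansion using vanish
    by (simp add: mv_pow_sum mv_pow_scale sum.neutral del: funpow.simps)
  then show ?thesis by (simp add: \<psi>_def)
qed

end

lemma lr_chainI: "lowering_chain d v X \<Longrightarrow> raising_chain d v Y \<phi> \<Longrightarrow> lr_chain d v X Y \<phi>"
  unfolding lr_chain_def lowering_chain_def raising_chain_def by auto

section \<open>LR pairs\<close>

lemma is_decompD:
  assumes "is_decomp d Vs"
  shows "i \<le> d \<Longrightarrow> vec.subspace (Vs i)" "i \<le> d \<Longrightarrow> vec.dim (Vs i) = 1" "d < i \<Longrightarrow> Vs i = {0}"
    "\<exists>!u. (\<forall>i\<le>d. u i \<in> Vs i) \<and> (\<forall>i>d. u i = 0) \<and> x = (\<Sum>i\<le>d. u i)"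
  using assms unfolding is_decomp_def by auto

lemma decomp_eq_span:
  "is_decomp d Vs \<Longrightarrow> k \<le> d \<Longrightarrow> v \<in> Vs k \<Longrightarrow> v \<noteq> 0 \<Longrightarrow> Vs k = vec.span {v}"
  using dim1_eq_span_singleton is_decompD(1,2) by blast

lemma decomp_indexed_basis:
  fixes v :: "nat \<Rightarrow> 'a::field^'n"
  assumes dec: "is_decomp d Vs"
    and mem: "\<And>k. k \<le> d \<Longrightarrow> v k \<in> Vs k" and nz: "\<And>k. k \<le> d \<Longrightarrow> v k \<noteq> 0"
  shows "indexed_basis d v"
proof (rule indexed_basis.intro)
  fix c i assume sum0: "(\<Sum>i\<le>d. c i *s v i) = 0" and i: "i \<le> d"
  define P where "P = (\<lambda>u. (\<forall>i\<le>d. u i \<in> Vs i) \<and> (\<forall>i>d. u i = 0) \<and> (0::'a^'n) = (\<Sum>i\<le>d. u i))"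
  have unique: "\<exists>!u. P u" unfolding P_def by (rule is_decompD(4)[OF dec])
  have "P (\<lambda>i. if i \<le> d then c i *s v i else 0)"
    unfolding P_def using sum0 mem is_decompD(1)[OF dec] by (simp add: vec.subspace_scale)
  moreover have "P (\<lambda>i. 0)" unfolding P_def using is_decompD(1)[OF dec] by (simp add: vec.subspace_0)
  ultimately have "(\<lambda>i. if i \<le> d then c i *s v i else 0) = (\<lambda>i. 0)"
    using the1_equality[OF unique] by metis
  then have "c i *s v i = 0" using i by (simp add: fun_eq_iff split: if_splits)
  then show "c i = 0" using nz[OF i] by simp
next
  fix x :: "'a^'n"
  obtain u where u: "\<forall>i\<le>d. u i \<in> Vs i" "x = (\<Sum>i\<le>d. u i)" using is_decompD(4)[OF dec, of x] by blast
  have "\<forall>i\<in>{..d}. \<exists>c. u i = c *s v i"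
  proof
    fix i assume i: "i \<in> {..d}"
    then have "u i \<in> Vs i" using u(1) by simp
    then have "u i \<in> vec.span {v i}" using decomp_eq_span[OF dec _ mem nz, of i] i by simp
    then show "\<exists>c. u i = c *s v i" by (simp add: in_span_singleton_iff)
  qed
  from bchoice[OF this] obtain c where "\<forall>i\<in>{..d}. u i = c i *s v i" ..
  then have "x = (\<Sum>i\<le>d. c i *s v i)" unfolding u(2) by (intro sum.cong) auto
  then show "\<exists>c. x = (\<Sum>i\<le>d. c i *s v i)" by blast
qed

definition lower_chain :: "nat \<Rightarrow> 'a::field^'n^'n \<Rightarrow> 'a^'n \<Rightarrow> nat \<Rightarrow> 'a^'n" where
  "lower_chain d X e k = mv_pow X (d - k) e"

lemma lower_chain_top [simp]: "lower_chain d X e d = e"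
  by (simp add: lower_chain_def)

context
  fixes d :: nat and Vs :: "nat \<Rightarrow> ('a::field^'n) set" and X :: "'a^'n^'n" and e :: "'a^'n"
  assumes dec: "is_decomp d Vs" and lo: "lowers d X Vs" and e: "e \<in> Vs d" "e \<noteq> 0"
begin

lemma lower_chain_mem_nonzero:
  assumes k: "k \<le> d"
  shows "lower_chain d X e k \<in> Vs k" "lower_chain d X e k \<noteq> 0"
proof -
  have "n \<le> d \<Longrightarrow> mv_pow X n e \<in> Vs (d - n) \<and> mv_pow X n e \<noteq> 0" for n
  proof (induction n)
    case (Suc n)
    then have IH: "mv_pow X n e \<in> Vs (d - n)" "mv_pow X n e \<noteq> 0" by auto
    have "(\<lambda>v. X *v v) ` Vs (d - n) = Vs (d - n - 1)"
      using lo Suc.prems unfolding lowers_def by simp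
    then have eq: "(\<lambda>v. X *v v) ` Vs (d - n) = Vs (d - Suc n)" by simp
    have "mv_pow X (Suc n) e \<in> Vs (d - Suc n)" using IH(1) eq by auto
    moreover have "mv_pow X (Suc n) e \<noteq> 0"
      using mv_nonzero_of_image_dim1[OF is_decompD(1,2)[OF dec] IH eq] is_decompD(2)[OF dec] by simp
    ultimately show ?case by simp
  qed (use e in simp)
  from this[of "d - k"] show "lower_chain d X e k \<in> Vs k" "lower_chain d X e k \<noteq> 0"
    using k by (auto simp: lower_chain_def)
qed

lemma decomp_eq_span_lower_chain: "k \<le> d \<Longrightarrow> Vs k = vec.span {lower_chain d X e k}"
  by (rule decomp_eq_span[OF dec _ lower_chain_mem_nonzero])

lemma lowering_chain_lower_chain: "lowering_chain d (lower_chain d X e) X"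
proof (intro lowering_chain.intro lowering_chain_axioms.intro)
  show "indexed_basis d (lower_chain d X e)"
    by (rule decomp_indexed_basis[OF dec lower_chain_mem_nonzero])
  show "X *v lower_chain d X e i = lower_chain d X e (i - 1)" if "1 \<le> i" "i \<le> d" for i
    using that by (simp add: lower_chain_def Suc_diff_le)
  show "X *v lower_chain d X e 0 = 0"
    using lower_chain_mem_nonzero(1)[of 0] lo unfolding lowers_def by auto
qed

end

lemma raises_step:
  assumes dec: "is_decomp d Vs" and ra: "raises d Y Vs"
    and mem: "v k \<in> Vs k" "v (Suc k) \<in> Vs (Suc k)" "v k \<noteq> 0" "v (Suc k) \<noteq> 0" and k: "k < d"
  obtains c where "c \<noteq> 0" "Y *v v k = c *s v (Suc k)"
proof -
  have img: "(\<lambda>v. Y *v v) ` Vs k = Vs (Suc k)" using ra k unfolding raises_def by auto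
  then have "Y *v v k \<in> vec.span {v (Suc k)}" using decomp_eq_span[OF dec _ mem(2,4)] mem(1) k by auto
  then obtain c where c: "Y *v v k = c *s v (Suc k)" by (auto simp: in_span_singleton_iff)
  moreover have "Y *v v k \<noteq> 0"
    using mv_nonzero_of_image_dim1[OF is_decompD(1,2)[OF dec] mem(1,3) img] is_decompD(2)[OF dec] k by simp
  ultimately show thesis using that by auto
qed

lemma raises_top: "raises d Y Vs \<Longrightarrow> v \<in> Vs d \<Longrightarrow> Y *v v = 0"
  unfolding raises_def by auto

lemma decomp_raising_chain:
  assumes dec: "is_decomp d Vs" and ra: "raises d Y Vs"
    and basis: "indexed_basis d v" and mem: "\<And>k. k \<le> d \<Longrightarrow> v k \<in> Vs k"
  obtains \<phi> where "raising_chain d v Y \<phi>"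
proof -
  have "\<forall>k\<in>{..<d}. \<exists>c. c \<noteq> 0 \<and> Y *v v k = c *s v (Suc k)"
    using raises_step[OF dec ra mem mem] indexed_basis.basis_nonzero[OF basis] by (metis lessThan_iff less_imp_le_nat Suc_leI)
  from bchoice[OF this] obtain c where c: "\<forall>k<d. c k \<noteq> 0 \<and> Y *v v k = c k *s v (Suc k)" by auto
  have "raising_chain d v Y (\<lambda>i. c (i - 1))"
  proof (intro raising_chain.intro raising_chain_axioms.intro basis)
    show "Y *v v d = 0" using raises_top[OF ra mem] by simp
  qed (use c in auto)
  then show thesis by (rule that)
qed

lemma lowers_raises_decomp_unique:
  fixes X Y :: "'a::field^'n^'n"
  assumes V: "is_decomp d Vs" "lowers d X Vs" "raises d Y Vs"
      and W: "is_decomp d Ws" "lowers d X Ws" "raises d Y Ws"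
  shows "Vs = Ws"
proof -
  obtain e where e: "e \<in> Vs d" "e \<noteq> 0" using dim1_ex_nonzero is_decompD(2)[OF V(1)] by blast
  obtain e' where e': "e' \<in> Ws d" "e' \<noteq> 0" using dim1_ex_nonzero is_decompD(2)[OF W(1)] by blast
  define v where "v = lower_chain d X e"
  define w where "w = lower_chain d X e'"
  interpret v: lowering_chain d v X unfolding v_def by (rule lowering_chain_lower_chain[OF V(1,2) e])
  interpret w: lowering_chain d w X unfolding w_def by (rule lowering_chain_lower_chain[OF W(1,2) e'])
  obtain \<phi> where "raising_chain d v Y \<phi>"
    using decomp_raising_chain[OF V(1,3) v.indexed_basis_axioms] lower_chain_mem_nonzero[OF V(1,2) e]
    unfolding v_def by blast
  then interpret v: raising_chain d v Y \<phi> .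
  obtain \<psi> where "raising_chain d w Y \<psi>"
    using decomp_raising_chain[OF W(1,3) w.indexed_basis_axioms] lower_chain_mem_nonzero[OF W(1,2) e']
    unfolding w_def by blast
  then interpret w: raising_chain d w Y \<psi> .
  txt \<open>\<open>Y^d\<close> maps the bottom of \<open>w\<close> into the top component of both decompositions.\<close>
  define y where "y = mv_pow Y d (w 0)"
  have y: "y \<noteq> 0" unfolding y_def by (rule w.raise_pow_bottom_nonzero) simp
  have "y \<in> Ws d"
    using w.raise_pow_bottom[of d] e' is_decompD(1)[OF W(1), of d] unfolding y_def w_def
    by (simp add: vec.subspace_scale)
  moreover have "y \<in> Vs d"
  proof -
    have "y = (\<Sum>j\<le>d. coord d v y j *s v j)" by (rule v.coord_expand)
    also have "\<dots> = coord d v y d *s v d"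
      by (rule sum_atMost_eq_last) (simp add: y_def v.coord_raise_pow_low)
    finally have "y = coord d v y d *s e" by (simp add: v_def)
    then show ?thesis using e is_decompD(1)[OF V(1) order_refl] by (metis vec.subspace_scale)
  qed
  ultimately have "Vs k = Ws k" if "k \<le> d" for k
    using decomp_eq_span_lower_chain[OF V(1,2) _ y that] decomp_eq_span_lower_chain[OF W(1,2) _ y that]
    by simp
  then show ?thesis using is_decompD(3)[OF V(1)] is_decompD(3)[OF W(1)] by (metis not_le ext)
qed

lemma lr_decomp_eq:
  assumes "is_decomp d Vs" "lowers d X Vs" "raises d Y Vs"
  shows "lr_decomp d X Y = Vs"
  unfolding lr_decomp_def using assms lowers_raises_decomp_unique by blast

lemma lr_pair_decomp:
  assumes "lr_pair d X Y"
  shows "is_decomp d (lr_decomp d X Y)" "lowers d X (lr_decomp d X Y)" "raises d Y (lr_decomp d X Y)"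
  using assms lr_decomp_eq unfolding lr_pair_def by metis+

lemma lr_pair_top_nonzero:
  assumes "lr_pair d X Y"
  obtains e where "e \<in> lr_decomp d X Y d" "e \<noteq> 0"
  using dim1_ex_nonzero is_decompD(2)[OF lr_pair_decomp(1)[OF assms]] by blast

lemma lr_param_eqI:
  fixes X Y :: "'a::field^'n^'n"
  assumes "lr_decomp d X Y i = vec.span {v}" "v \<noteq> 0" "Y *v (X *v v) = c *s v"
  shows "lr_param d X Y i = c"
  unfolding lr_param_def
proof (rule the_equality)
  show "\<forall>x\<in>lr_decomp d X Y i. (Y ** X) *v x = c *s x"
    using assms(1,3) by (auto simp: in_span_singleton_iff matrix_vector_mul_assoc[symmetric]
        vector_scalar_commute mult.commute)
next
  fix \<phi> assume "\<forall>x\<in>lr_decomp d X Y i. (Y ** X) *v x = \<phi> *s x"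
  then have "\<phi> *s v = c *s v"
    using assms(1,3) vec.span_base[of v "{v}"] by (simp add: matrix_vector_mul_assoc[symmetric])
  then show "\<phi> = c" using assms(2) by simp
qed

context
  fixes d :: nat and X Y :: "'a::field^'n^'n" and e :: "'a^'n"
  assumes pair: "lr_pair d X Y" and e: "e \<in> lr_decomp d X Y d" "e \<noteq> 0"
begin

lemma lr_decomp_eq_span: "k \<le> d \<Longrightarrow> lr_decomp d X Y k = vec.span {lower_chain d X e k}"
  using decomp_eq_span_lower_chain[OF lr_pair_decomp(1,2)[OF pair] e] .

lemma lr_pair_lowering_chain: "lowering_chain d (lower_chain d X e) X"
  using lowering_chain_lower_chain[OF lr_pair_decomp(1,2)[OF pair] e] .

lemma lr_pair_raising_chain: "raising_chain d (lower_chain d X e) Y (lr_param d X Y)"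
proof -
  define v where "v = lower_chain d X e"
  interpret lowering_chain d v X unfolding v_def by (rule lr_pair_lowering_chain)
  obtain \<phi> where "raising_chain d v Y \<phi>"
    using decomp_raising_chain[OF lr_pair_decomp(1,3)[OF pair] indexed_basis_axioms]
      lower_chain_mem_nonzero[OF lr_pair_decomp(1,2)[OF pair] e] unfolding v_def by blast
  then interpret raising_chain d v Y \<phi> .
  have param: "lr_param d X Y i = \<phi> i" if "1 \<le> i" "i \<le> d" for i
  proof (rule lr_param_eqI)
    show "lr_decomp d X Y i = vec.span {v i}" using lr_decomp_eq_span that unfolding v_def by simp
    show "v i \<noteq> 0" using basis_nonzero that by simp
    show "Y *v (X *v v i) = \<phi> i *s v i"
      using that lower_step[of i] raise_step[of "i - 1"] by simp
  qed
  show ?thesis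
    unfolding v_def[symmetric]
    by (intro raising_chain.intro raising_chain_axioms.intro indexed_basis_axioms)
      (auto simp: param raise_step raise_top param_nonzero)
qed

end

definition reflect_decomp :: "nat \<Rightarrow> (nat \<Rightarrow> ('a::field^'n) set) \<Rightarrow> nat \<Rightarrow> ('a^'n) set" where
  "reflect_decomp d Vs i = (if i \<le> d then Vs (d - i) else {0})"

definition reflect_seq :: "nat \<Rightarrow> (nat \<Rightarrow> 'a::zero) \<Rightarrow> nat \<Rightarrow> 'a" where
  "reflect_seq d u i = (if i \<le> d then u (d - i) else 0)"

lemma reflect_seq_reflect_seq: "(\<And>i. d < i \<Longrightarrow> u i = 0) \<Longrightarrow> reflect_seq d (reflect_seq d u) = u"
  by (auto simp: reflect_seq_def fun_eq_iff)

lemma sum_reflect_seq: "(\<Sum>i\<le>d. reflect_seq d u i) = (\<Sum>i\<le>d. u i)"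
  using sum_atMost_reflect[of u d] by (simp add: reflect_seq_def)

lemma reflect_seq_mem_iff:
  "(\<forall>i\<le>d. u i \<in> reflect_decomp d Vs i) \<longleftrightarrow> (\<forall>i\<le>d. reflect_seq d u i \<in> Vs i)"
proof
  assume h: "\<forall>i\<le>d. u i \<in> reflect_decomp d Vs i"
  show "\<forall>i\<le>d. reflect_seq d u i \<in> Vs i"
  proof (intro allI impI)
    fix i assume "i \<le> d"
    then show "reflect_seq d u i \<in> Vs i"
      using h[rule_format, of "d - i"] by (simp add: reflect_seq_def reflect_decomp_def)
  qed
next
  assume h: "\<forall>i\<le>d. reflect_seq d u i \<in> Vs i"
  show "\<forall>i\<le>d. u i \<in> reflect_decomp d Vs i"
  proof (intro allI impI)
    fix i assume "i \<le> d"
    then show "u i \<in> reflect_decomp d Vs i"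
      using h[rule_format, of "d - i"] by (simp add: reflect_seq_def reflect_decomp_def)
  qed
qed

lemma is_decomp_reflect:
  fixes Vs :: "nat \<Rightarrow> ('a::field^'n) set"
  assumes dec: "is_decomp d Vs"
  shows "is_decomp d (reflect_decomp d Vs)"
  unfolding is_decomp_def
proof (intro conjI allI impI)
  fix i assume "i \<le> d"
  then show "vec.subspace (reflect_decomp d Vs i)" "vec.dim (reflect_decomp d Vs i) = 1"
    using is_decompD(1,2)[OF dec, of "d - i"] by (auto simp: reflect_decomp_def)
next
  fix i assume "d < i"
  then show "reflect_decomp d Vs i = {0}" by (simp add: reflect_decomp_def)
next
  fix x :: "'a^'n"
  define P where "P W u \<longleftrightarrow> (\<forall>i\<le>d. u i \<in> W i) \<and> (\<forall>i>d. u i = 0) \<and> x = (\<Sum>i\<le>d. u i)"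
    for W u
  have high: "\<forall>i>d. reflect_seq d u i = 0" for u :: "nat \<Rightarrow> 'a^'n" by (simp add: reflect_seq_def)
  have P_reflect: "P (reflect_decomp d Vs) u \<longleftrightarrow> P Vs (reflect_seq d u) \<and> (\<forall>i>d. u i = 0)" for u
    unfolding P_def reflect_seq_mem_iff sum_reflect_seq using high by blast
  have "\<exists>!u. P Vs u" unfolding P_def by (rule is_decompD(4)[OF dec])
  then obtain u where u: "P Vs u" "\<And>u'. P Vs u' \<Longrightarrow> u' = u" by (metis ex1E)
  have "reflect_seq d (reflect_seq d u) = u" using u(1) reflect_seq_reflect_seq unfolding P_def by blast
  then have "P (reflect_decomp d Vs) (reflect_seq d u)" using P_reflect[of "reflect_seq d u"] u(1) high by simp
  moreover have "u' = reflect_seq d u" if "P (reflect_decomp d Vs) u'" for u'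
  proof -
    have "reflect_seq d u' = u" "\<forall>i>d. u' i = 0" using that u(2) P_reflect by blast+
    then show ?thesis using reflect_seq_reflect_seq[of d u'] by simp
  qed
  ultimately have "\<exists>!u. P (reflect_decomp d Vs) u" by (rule ex1I)
  then show "\<exists>!u. (\<forall>i\<le>d. u i \<in> reflect_decomp d Vs i) \<and> (\<forall>i>d. u i = 0) \<and> x = (\<Sum>i\<le>d. u i)"
    unfolding P_def .
qed

lemma raises_reflect: "lowers d X Vs \<Longrightarrow> raises d X (reflect_decomp d Vs)"
  unfolding lowers_def raises_def reflect_decomp_def
  by (auto simp: Suc_diff_Suc)

lemma lowers_reflect: "raises d Y Vs \<Longrightarrow> lowers d Y (reflect_decomp d Vs)"
  unfolding lowers_def raises_def reflect_decomp_def
  by (auto simp: Suc_diff_le)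

lemma lr_pair_swap:
  assumes "lr_pair d C A"
  shows "lr_pair d A C" "lr_decomp d A C = reflect_decomp d (lr_decomp d C A)"
proof -
  note dec = lr_pair_decomp[OF assms]
  have "is_decomp d (reflect_decomp d (lr_decomp d C A))" "lowers d A (reflect_decomp d (lr_decomp d C A))"
    "raises d C (reflect_decomp d (lr_decomp d C A))"
    using is_decomp_reflect lowers_reflect raises_reflect dec by blast+
  then show "lr_pair d A C" "lr_decomp d A C = reflect_decomp d (lr_decomp d C A)"
    unfolding lr_pair_def using lr_decomp_eq by blast+
qed

lemma lr_param_swap:
  fixes A C :: "'a::field^'n^'n"
  assumes pair: "lr_pair d C A" and s: "1 \<le> s" "s \<le> d"
  shows "lr_param d A C s = lr_param d C A (d + 1 - s)"
proof -
  have swapped: "lr_pair d A C" by (rule lr_pair_swap(1)[OF pair])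
  obtain e where e: "e \<in> lr_decomp d A C d" "e \<noteq> 0" using lr_pair_top_nonzero[OF swapped] .
  define w where "w = lower_chain d A e"
  interpret lowering_chain d w A unfolding w_def by (rule lr_pair_lowering_chain[OF swapped e])
  interpret raising_chain d w C "lr_param d A C" unfolding w_def by (rule lr_pair_raising_chain[OF swapped e])
  have "lr_param d C A (d + 1 - s) = lr_param d A C s"
  proof (rule lr_param_eqI)
    have "lr_decomp d C A (d + 1 - s) = lr_decomp d A C (s - 1)"
      using lr_pair_swap(2)[OF pair] s by (auto simp: reflect_decomp_def)
    then show "lr_decomp d C A (d + 1 - s) = vec.span {w (s - 1)}"
      using lr_decomp_eq_span[OF swapped e] s unfolding w_def by simp
    show "w (s - 1) \<noteq> 0" using basis_nonzero s by simp
    show "A *v (C *v w (s - 1)) = lr_param d A C s *s w (s - 1)"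
      using raise_step[of "s - 1"] lower_step[of s] s by (simp add: vector_scalar_commute)
  qed
  then show ?thesis by simp
qed

section \<open>Transition matrices between compatible bases\<close>

definition toeplitz_coeffs :: "nat \<Rightarrow> (nat \<Rightarrow> 'a::field^'n) \<Rightarrow> (nat \<Rightarrow> 'a^'n) \<Rightarrow> nat \<Rightarrow> 'a" where
  "toeplitz_coeffs d u w m = (if m \<le> d then coord d u (w d) (d - m) else 0)"

lemma toeplitz_transition_lowering_chains:
  assumes u: "lowering_chain d u X" and w: "lowering_chain d w X" and top: "coord d u (w d) d = 1"
  shows "toeplitz_transition d u w (toeplitz_coeffs d u w)"
  unfolding toeplitz_transition_def
proof (intro conjI allI impI)
  show "toeplitz_coeffs d u w 0 = 1" using top by (simp add: toeplitz_coeffs_def)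
next
  fix i assume "d < i" then show "toeplitz_coeffs d u w i = 0" by (simp add: toeplitz_coeffs_def)
next
  fix k assume k: "k \<le> d"
  interpret u: lowering_chain d u X by (rule u)
  have "coord d u (w k) i = (if i \<le> k then toeplitz_coeffs d u w (k - i) else 0)" if "i \<le> d" for i
    using u.coord_lower_pow[of "d - k" "w d" i] lowering_chain.lower_pow_top[OF w k] k that
    by (auto simp: toeplitz_coeffs_def le_diff_conv2 diff_diff_right add.commute)
  then have "w k = (\<Sum>i\<le>d. if i \<le> k then toeplitz_coeffs d u w (k - i) *s u i else 0)"
    by (subst u.coord_expand) (auto intro: sum.cong)
  also have "\<dots> = (\<Sum>i\<le>k. toeplitz_coeffs d u w (k - i) *s u i)" by (rule sum_atMost_if_le[OF k])
  finally show "w k = (\<Sum>i\<le>k. toeplitz_coeffs d u w (k - i) *s u i)" .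
qed

lemma (in indexed_basis) coord_toeplitz:
  assumes "toeplitz_transition d v w \<gamma>" "m \<le> d" "j \<le> d"
  shows "coord d v (w m) j = (if j \<le> m then \<gamma> (m - j) else 0)"
proof -
  have "(\<Sum>i\<le>d. (if i \<le> m then \<gamma> (m - i) else 0) *s v i)
      = (\<Sum>i\<le>d. if i \<le> m then \<gamma> (m - i) *s v i else 0)"
    by (intro sum.cong) auto
  also have "\<dots> = (\<Sum>i\<le>m. \<gamma> (m - i) *s v i)" by (rule sum_atMost_if_le[OF assms(2)])
  also have "\<dots> = w m" using assms(1,2) unfolding toeplitz_transition_def by simp
  finally have "w m = (\<Sum>i\<le>d. (if i \<le> m then \<gamma> (m - i) else 0) *s v i)" ..
  from coord_unique[OF this assms(3)] show ?thesis by simp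
qed

lemma toeplitz_transition_rescale_unique:
  assumes u: "indexed_basis d u" and T: "toeplitz_transition d u w \<gamma>"
    and T': "toeplitz_transition d u' w' \<gamma>'"
    and s: "s \<noteq> 0" "\<And>i. i \<le> d \<Longrightarrow> u' i = s *s u i" and t: "\<And>i. i \<le> d \<Longrightarrow> w' i = t *s w i"
  shows "\<gamma>' = \<gamma>"
proof
  interpret indexed_basis d u by (rule u)
  have "w' d = (\<Sum>i\<le>d. (\<gamma>' (d - i) * s) *s u i)"
    using T' s(2) unfolding toeplitz_transition_def by (auto intro: sum.cong)
  then have via_T': "coord d u (w' d) j = \<gamma>' (d - j) * s" if "j \<le> d" for j
    using coord_unique that by simp
  have via_T: "coord d u (w' d) j = t * \<gamma> (d - j)" if "j \<le> d" for j
    using coord_toeplitz[OF T order_refl that] t[OF order_refl] that by (simp add: coord_scale)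
  have one: "\<gamma> 0 = 1" "\<gamma>' 0 = 1" using T T' unfolding toeplitz_transition_def by auto
  txt \<open>Both transitions have diagonal \<open>1\<close>, which forces equal scale factors.\<close>
  then have "t = s" using via_T[of d] via_T'[of d] by simp
  fix m show "\<gamma>' m = \<gamma> m"
  proof (cases "m \<le> d")
    case True
    then show ?thesis using via_T[of "d - m"] via_T'[of "d - m"] s(1) \<open>t = s\<close> by (simp add: mult.commute)
  next
    case False then show ?thesis using T T' unfolding toeplitz_transition_def by auto
  qed
qed

lemma lr_basis_lower_chain:
  assumes "lr_pair d X Y" "e \<in> lr_decomp d X Y d" "e \<noteq> 0"
  shows "lr_basis d X Y (lower_chain d X e)"
proof -
  interpret lowering_chain d "lower_chain d X e" X by (rule lr_pair_lowering_chain[OF assms])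
  have inj: "inj_on (lower_chain d X e) {..d}"
    by (rule inj_onI) (metis atMost_iff coord_of_basis one_neq_zero)
  have "vec.independent (lower_chain d X e ` {..d})"
    unfolding vec.independent_explicit
  proof (intro conjI allI impI)
    fix c assume "(\<Sum>v\<in>lower_chain d X e ` {..d}. c v *s v) = 0"
    then have "(\<Sum>i\<le>d. c (lower_chain d X e i) *s lower_chain d X e i) = 0"
      by (simp add: sum.reindex[OF inj])
    from independent[OF this] show "\<forall>v\<in>lower_chain d X e ` {..d}. c v = 0" by blast
  qed simp
  moreover have "vec.span (lower_chain d X e ` {..d}) = UNIV"
  proof -
    have "x \<in> vec.span (lower_chain d X e ` {..d})" for x
      by (subst coord_expand) (intro vec.span_sum vec.span_scale vec.span_base; simp)
    then show ?thesis by auto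
  qed
  moreover have "\<forall>i\<le>d. lower_chain d X e i \<in> lr_decomp d X Y i"
    using lr_decomp_eq_span[OF assms] by (simp add: vec.span_base)
  ultimately show ?thesis unfolding lr_basis_def using inj lower_step by auto
qed

lemma lr_basis_scaled:
  assumes pair: "lr_pair d X Y" and e: "e \<in> lr_decomp d X Y d" "e \<noteq> 0" and b: "lr_basis d X Y v"
  obtains s where "s \<noteq> 0" "\<And>i. i \<le> d \<Longrightarrow> v i = s *s lower_chain d X e i"
proof -
  have lower_pow: "n \<le> d \<Longrightarrow> mv_pow X n (v d) = v (d - n)" for n
    using b unfolding lr_basis_def by (induction n) (auto simp: Suc_diff_Suc[symmetric])
  have "v d \<noteq> 0" using b vec.dependent_zero[of "v ` {..d}"] unfolding lr_basis_def by auto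
  moreover have "v d \<in> vec.span {lower_chain d X e d}"
    using b lr_decomp_eq_span[OF pair e, of d] unfolding lr_basis_def by auto
  then obtain s where s: "v d = s *s e" by (auto simp: in_span_singleton_iff)
  ultimately have "s \<noteq> 0" by auto
  moreover have "v i = s *s lower_chain d X e i" if "i \<le> d" for i
    using lower_pow[of "d - i"] that by (simp add: s lower_chain_def mv_pow_scale)
  ultimately show thesis using that by blast
qed

lemma trans_params_lower_chains:
  fixes X Y Z :: "'a::field^'n^'n"
  assumes pY: "lr_pair d X Y" and pZ: "lr_pair d X Z"
    and e1: "e1 \<in> lr_decomp d X Y d" "e1 \<noteq> 0" and e2: "e2 \<in> lr_decomp d X Z d" "e2 \<noteq> 0"
    and T: "toeplitz_transition d (lower_chain d X e1) (lower_chain d X e2) \<gamma>"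
  shows "trans_params d X Y Z = \<gamma>"
  unfolding trans_params_def
proof (rule the_equality)
  show "\<exists>u w. lr_basis d X Y u \<and> lr_basis d X Z w \<and> toeplitz_transition d u w \<gamma>"
    using lr_basis_lower_chain[OF pY e1] lr_basis_lower_chain[OF pZ e2] T by blast
next
  fix \<gamma>' assume "\<exists>u w. lr_basis d X Y u \<and> lr_basis d X Z w \<and> toeplitz_transition d u w \<gamma>'"
  then obtain u w where h: "lr_basis d X Y u" "lr_basis d X Z w" "toeplitz_transition d u w \<gamma>'" by blast
  obtain s where s: "s \<noteq> 0" "\<And>i. i \<le> d \<Longrightarrow> u i = s *s lower_chain d X e1 i"
    using lr_basis_scaled[OF pY e1 h(1)] by blast
  obtain t where "\<And>i. i \<le> d \<Longrightarrow> w i = t *s lower_chain d X e2 i"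
    using lr_basis_scaled[OF pZ e2 h(2)] by blast
  then show "\<gamma>' = \<gamma>"
    using toeplitz_transition_rescale_unique[OF _ T h(3) s] lowering_chain.axioms(1)[OF lr_pair_lowering_chain[OF pY e1]]
    by blast
qed

section \<open>The third matrix in the basis of the first pair\<close>

definition param_ext :: "nat \<Rightarrow> (nat \<Rightarrow> 'a::zero) \<Rightarrow> nat \<Rightarrow> 'a" where
  "param_ext d \<phi> s = (if 1 \<le> s \<and> s \<le> d then \<phi> s else 0)"

text \<open>Entry \<open>(j, k)\<close> of the matrix of \<open>C\<close> in an \<open>(A,B)\<close>-basis, where \<open>\<phi>\<close>, \<open>\<phi>'\<close>, \<open>\<psi>\<close> are
  the parameter sequences of \<open>(A,B)\<close>, \<open>(B,C)\<close>, \<open>(A,C)\<close> and \<open>g\<close> is the entry \<open>\<gamma> 1\<close> of the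
  transition matrix to a compatible \<open>(A,C)\<close>-basis.\<close>

definition lr_third_entry ::
  "nat \<Rightarrow> (nat \<Rightarrow> 'a::field) \<Rightarrow> (nat \<Rightarrow> 'a) \<Rightarrow> (nat \<Rightarrow> 'a) \<Rightarrow> 'a \<Rightarrow> nat \<Rightarrow> nat \<Rightarrow> 'a" where
  "lr_third_entry d \<phi> \<phi>' \<psi> g k j =
     (if j = Suc k then param_ext d \<psi> (Suc k)
      else if j = k then g * (param_ext d \<psi> (Suc k) - param_ext d \<psi> k)
      else if Suc j = k then \<phi>' (d + 1 - k) / \<phi> k
      else 0)"

locale lr_triple_chains =
  u: lr_chain d u A B \<phi> + z: lr_chain d z B C \<phi>' + w: lr_chain d w A C \<psi>
  for d and u :: "nat \<Rightarrow> 'a::field^'n" and A B \<phi> z C \<phi>' w \<psi> +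
  fixes \<gamma> :: "nat \<Rightarrow> 'a"
  assumes transition: "toeplitz_transition d u w \<gamma>"
begin

lemma transition_0: "\<gamma> 0 = 1"
  using transition unfolding toeplitz_transition_def by blast

lemma coord_third_above: "k \<le> d \<Longrightarrow> Suc (Suc k) \<le> j \<Longrightarrow> coord d u (C *v u k) j = 0"
proof -
  assume k: "k \<le> d" and j: "Suc (Suc k) \<le> j"
  have "mv_pow A (Suc k) (u k) = 0" using u.lower_pow_basis[OF k, of "Suc k"] by simp
  then have "mv_pow A (Suc (Suc k)) (C *v u k) = 0" by (rule w.lower_pow_raise_eq_0)
  then show ?thesis using u.coord_zero_of_lower_pow j by blast
qed

lemma coord_third_below: "k \<le> d \<Longrightarrow> j + 2 \<le> k \<Longrightarrow> coord d u (C *v u k) j = 0"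
proof -
  assume k: "k \<le> d" and j: "j + 2 \<le> k"
  have "mv_pow B (Suc (d - k)) (u k) = 0" by (rule u.raise_pow_basis_eq_0[OF k]) linarith
  then have "mv_pow B (Suc (Suc (d - k))) (C *v u k) = 0" by (rule z.lower_pow_raise_eq_0)
  moreover have "j + Suc (Suc (d - k)) \<le> d" using j k by linarith
  ultimately show ?thesis using u.coord_zero_of_raise_pow by blast
qed

lemma coord_third_transition:
  assumes k: "k \<le> d" and j: "j \<le> d"
  shows "(\<Sum>i\<le>k. \<gamma> (k - i) * coord d u (C *v u i) j)
    = param_ext d \<psi> (Suc k) * (if j \<le> Suc k then \<gamma> (Suc k - j) else 0)"
proof -
  have "w k = (\<Sum>i\<le>k. \<gamma> (k - i) *s u i)" using transition k unfolding toeplitz_transition_def by blast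
  then have "(\<Sum>i\<le>k. \<gamma> (k - i) * coord d u (C *v u i) j) = coord d u (C *v w k) j"
    by (simp add: vec.sum vector_scalar_commute u.coord_sum u.coord_scale)
  also have "C *v w k = param_ext d \<psi> (Suc k) *s w (Suc k)"
    using k w.raise_step[of k] w.raise_top by (cases "k < d") (auto simp: param_ext_def)
  finally show ?thesis
    using u.coord_toeplitz[OF transition _ j, of "Suc k"] by (cases "Suc k \<le> d") (auto simp: u.coord_scale u.coord_zero param_ext_def)
qed

lemma coord_third_super: "k < d \<Longrightarrow> coord d u (C *v u k) (Suc k) = param_ext d \<psi> (Suc k)"
proof -
  assume k: "k < d"
  have "(\<Sum>i\<le>k. \<gamma> (k - i) * coord d u (C *v u i) (Suc k)) = \<gamma> (k - k) * coord d u (C *v u k) (Suc k)"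
    by (rule sum_atMost_eq_last) (use coord_third_above k in simp)
  then show ?thesis using coord_third_transition[of k "Suc k"] k transition_0 by simp
qed

lemma coord_third_diag: "k \<le> d \<Longrightarrow> coord d u (C *v u k) k = \<gamma> 1 * (param_ext d \<psi> (Suc k) - param_ext d \<psi> k)"
proof -
  assume k: "k \<le> d"
  have diag: "(\<Sum>i\<le>k. \<gamma> (k - i) * coord d u (C *v u i) k) = param_ext d \<psi> (Suc k) * \<gamma> 1"
    using coord_third_transition[OF k k] by simp
  show ?thesis
  proof (cases k)
    case 0
    then show ?thesis using diag transition_0 by (simp add: param_ext_def mult.commute)
  next
    case (Suc k')
    have "(\<Sum>i\<le>k'. \<gamma> (Suc k' - i) * coord d u (C *v u i) k) = \<gamma> 1 * coord d u (C *v u k') k"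
      by (rule trans[OF sum_atMost_eq_last]) (use coord_third_above k Suc in auto)
    also have "\<dots> = \<gamma> 1 * param_ext d \<psi> k" using coord_third_super[of k'] Suc k by simp
    finally show ?thesis using diag Suc transition_0 by (simp add: algebra_simps)
  qed
qed

text \<open>The subdiagonal comes from the pair \<open>(B,C)\<close>: \<open>u k\<close> lies in the kernel of \<open>B^(d-k+1)\<close>, on which
  \<open>BC\<close> acts as \<open>\<phi>' (d - k + 1)\<close> modulo the kernel of \<open>B^(d-k)\<close>.\<close>

lemma coord_third_sub:
  assumes k1: "1 \<le> k" and k: "k \<le> d"
  shows "coord d u (C *v u k) (k - 1) = \<phi>' (d + 1 - k) / \<phi> k"
proof -
  define m where "m = d - k"
  have "mv_pow B (Suc m) (u k) = 0" unfolding m_def by (rule u.raise_pow_basis_eq_0[OF k]) linarith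
  then have "\<And>j. m < j \<Longrightarrow> coord d z (u k) j = 0" using z.coord_zero_of_lower_pow by (metis Suc_leI)
  moreover have "m \<le> d" "Suc m \<le> d" "Suc m = d + 1 - k" using k1 k unfolding m_def by auto
  ultimately have "mv_pow B m (B *v (C *v u k) - \<phi>' (d + 1 - k) *s u k) = 0"
    using z.lower_pow_eigen[of m "u k"] by simp
  then have "coord d u (B *v (C *v u k) - \<phi>' (d + 1 - k) *s u k) k = 0"
    using u.coord_zero_of_raise_pow k unfolding m_def by simp
  then have "coord d u (B *v (C *v u k)) k = \<phi>' (d + 1 - k)"
    using k by (simp add: u.coord_diff u.coord_scale u.coord_of_basis)
  then show ?thesis
    using u.coord_raise[OF k] k1 u.param_nonzero[OF k1 k] by (simp add: field_simps)
qed

lemma coord_third: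
  assumes k: "k \<le> d" and j: "j \<le> d"
  shows "coord d u (C *v u k) j = lr_third_entry d \<phi> \<phi>' \<psi> (\<gamma> 1) k j"
proof -
  consider "j = Suc k" | "j = k" | "Suc j = k" | "Suc (Suc k) \<le> j" | "j + 2 \<le> k" by linarith
  then show ?thesis
  proof cases
    case 3
    then show ?thesis using coord_third_sub[of k] k by (auto simp: lr_third_entry_def)
  qed (use coord_third_super coord_third_diag coord_third_above coord_third_below k j in
      \<open>auto simp: lr_third_entry_def\<close>)
qed

end

section \<open>Change of basis\<close>

lemma (in indexed_basis) trace_mult_coord_proj:
  "trace (M ** matrix (\<lambda>x. coord d v x i *s v i)) = coord d v (M *v v i) i"
proof -
  have "trace (M ** matrix (\<lambda>x. coord d v x i *s v i))
      = (\<Sum>r\<in>UNIV. \<Sum>k\<in>UNIV. M $ r $ k * (coord d v (axis r 1) i * v i $ k))"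
    by (simp add: trace_def matrix_matrix_mult_def matrix_def)
  also have "\<dots> = (\<Sum>r\<in>UNIV. coord d v (axis r 1) i * (M *v v i) $ r)"
    by (simp add: matrix_vector_mult_def sum_distrib_left mult_ac)
  also have "\<dots> = coord d v (\<Sum>r\<in>UNIV. (M *v v i) $ r *s axis r 1) i"
    by (simp add: coord_sum coord_scale mult.commute)
  also have "(\<Sum>r\<in>UNIV. (M *v v i) $ r *s axis r 1) = M *v v i" by (rule basis_expansion)
  finally show ?thesis .
qed

definition basis_change :: "nat \<Rightarrow> (nat \<Rightarrow> 'a::field^'n) \<Rightarrow> (nat \<Rightarrow> 'a^'n) \<Rightarrow> 'a^'n^'n" where
  "basis_change d v v' = matrix (\<lambda>x. \<Sum>i\<le>d. coord d v x i *s v' i)"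

context indexed_basis
begin

lemma linear_coord_map: "Vector_Spaces.linear (*s) (*s) (\<lambda>x. \<Sum>i\<le>d. coord d v x i *s (v' i :: 'a^'n))"
  by (rule Vector_Spaces.linear_iff[THEN iffD2])
    (simp add: vec.vector_space_axioms coord_add coord_scale vec.scale_left_distrib sum.distrib
      vec.scale_sum_right)

lemma basis_change_apply: "basis_change d v v' *v x = (\<Sum>i\<le>d. coord d v x i *s v' i)"
  unfolding basis_change_def by (rule matrix_works[OF linear_coord_map])

lemma basis_change_basis:
  assumes k: "k \<le> d"
  shows "basis_change d v v' *v v k = v' k"
proof -
  have "basis_change d v v' *v v k = (\<Sum>i\<le>d. (if i = k then 1 else 0) *s v' i)"
    unfolding basis_change_apply using k by (intro sum.cong) (simp_all add: coord_of_basis)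
  then show ?thesis using k by (simp add: sum_delta_scale)
qed

lemma basis_change_intertwine:
  assumes v': "indexed_basis d v'"
    and same: "\<And>k j. k \<le> d \<Longrightarrow> j \<le> d \<Longrightarrow> coord d v (M *v v k) j = coord d v' (M' *v v' k) j"
  shows "basis_change d v v' ** M = M' ** basis_change d v v'"
proof (rule matrix_eqI)
  fix k assume k: "k \<le> d"
  have "(basis_change d v v' ** M) *v v k = (\<Sum>j\<le>d. coord d v' (M' *v v' k) j *s v' j)"
    using k same by (auto simp: matrix_vector_mul_assoc[symmetric] basis_change_apply intro: sum.cong)
  also have "\<dots> = M' *v v' k" by (rule indexed_basis.coord_expand[OF v', symmetric])
  also have "\<dots> = (M' ** basis_change d v v') *v v k"
    by (simp add: matrix_vector_mul_assoc[symmetric] basis_change_basis[OF k])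
  finally show "(basis_change d v v' ** M) *v v k = (M' ** basis_change d v v') *v v k" .
qed

lemma invertible_basis_change:
  assumes v': "indexed_basis d v'"
  shows "invertible (basis_change d v v')"
proof -
  have "basis_change d v v' ** basis_change d v' v = mat 1"
    by (rule indexed_basis.matrix_eqI[OF v'])
      (simp add: matrix_vector_mul_assoc[symmetric] indexed_basis.basis_change_basis[OF v'] basis_change_basis)
  moreover have "basis_change d v' v ** basis_change d v v' = mat 1"
    by (rule matrix_eqI)
      (simp add: matrix_vector_mul_assoc[symmetric] indexed_basis.basis_change_basis[OF v'] basis_change_basis)
  ultimately show ?thesis unfolding invertible_def by blast
qed

end

lemma lr_triple_iso_of_same_coords:
  fixes A B C A' B' C' :: "'a::field^'n^'n"
  assumes v: "indexed_basis d v" and v': "indexed_basis d v'"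
    and same: "\<And>M M' k j. (M, M') \<in> {(A, A'), (B, B'), (C, C')} \<Longrightarrow> k \<le> d \<Longrightarrow> j \<le> d \<Longrightarrow>
      coord d v (M *v v k) j = coord d v' (M' *v v' k) j"
  shows "lr_triple_iso A B C A' B' C'"
  unfolding lr_triple_iso_def
  using indexed_basis.invertible_basis_change[OF v v'] indexed_basis.basis_change_intertwine[OF v v'] same
  by blast

lemma decomp_component_coord:
  fixes Vs :: "nat \<Rightarrow> ('a::field^'n) set"
  assumes dec: "is_decomp d Vs" and v: "indexed_basis d v" and mem: "\<And>k. k \<le> d \<Longrightarrow> v k \<in> Vs k"
    and i: "i \<le> d"
  shows "decomp_component d Vs i x = coord d v x i *s v i"
proof -
  interpret indexed_basis d v by (rule v)
  define P where "P = (\<lambda>u. (\<forall>j\<le>d. u j \<in> Vs j) \<and> (\<forall>j>d. u j = (0::'a^'n)) \<and> x = (\<Sum>j\<le>d. u j))"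
  define U where "U = (\<lambda>j. if j \<le> d then coord d v x j *s v j else 0)"
  have "P U"
    unfolding P_def U_def using mem is_decompD(1)[OF dec] coord_expand[of x]
    by (simp add: vec.subspace_scale)
  then have "(THE u. P u) = U" using is_decompD(4)[OF dec, of x] unfolding P_def[symmetric]
    by (rule the1_equality[rotated])
  then show ?thesis unfolding decomp_component_def P_def[symmetric] U_def using i by simp
qed

lemma a_seq_lower_chain:
  assumes pair: "lr_pair d A B" and e: "e \<in> lr_decomp d A B d" "e \<noteq> 0" and i: "i \<le> d"
  shows "a_seq d A B C i = coord d (lower_chain d A e) (C *v lower_chain d A e i) i"
proof -
  interpret lowering_chain d "lower_chain d A e" A by (rule lr_pair_lowering_chain[OF pair e])
  have "decomp_component d (lr_decomp d A B) i = (\<lambda>x. coord d (lower_chain d A e) x i *s lower_chain d A e i)"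
    using decomp_component_coord[OF lr_pair_decomp(1)[OF pair] indexed_basis_axioms _ i]
      lower_chain_mem_nonzero(1)[OF lr_pair_decomp(1,2)[OF pair] e] by blast
  then show ?thesis unfolding a_seq_def decomp_proj_def by (simp add: trace_mult_coord_proj)
qed

lemma (in lowering_chain) coord_top_nonzero:
  assumes w: "lowering_chain d w X"
  shows "coord d v (w d) d \<noteq> 0"
proof
  assume top: "coord d v (w d) d = 0"
  have "mv_pow X d (w d) = w 0" using lowering_chain.lower_pow_top[OF w] by fastforce
  moreover have "coord d v (mv_pow X d (w d)) j = coord d v 0 j" for j
    using top by (cases "j = 0") (auto simp: coord_lower_pow coord_zero)
  ultimately have "w 0 = 0" using coord_eqI by metis
  then show False using indexed_basis.basis_nonzero[OF lowering_chain.axioms(1)[OF w]] by simp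
qed

lemma toeplitz_transition_swap_top:
  assumes u: "lowering_chain d u X" and w: "lowering_chain d w X" and T: "toeplitz_transition d u w \<gamma>"
  shows "coord d w (u d) d = 1"
proof -
  interpret w: lowering_chain d w X by (rule w)
  have "w 0 = u 0" using T unfolding toeplitz_transition_def by auto
  moreover have "mv_pow X d (u d) = u 0" using lowering_chain.lower_pow_top[OF u] by fastforce
  ultimately show ?thesis using w.coord_lower_pow[of d "u d" 0] w.coord_of_basis[of 0 0] by simp
qed

lemma toeplitz_transition_inverse_1:
  assumes u: "indexed_basis d u" and T: "toeplitz_transition d u w \<gamma>" and T': "toeplitz_transition d w u \<gamma>'"
    and d: "1 \<le> d"
  shows "\<gamma>' 1 = - \<gamma> 1"
proof -
  have one: "\<gamma> 0 = 1" "\<gamma>' 0 = 1" using T T' unfolding toeplitz_transition_def by auto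
  have "w 0 = (\<Sum>i\<le>0. \<gamma> (0 - i) *s u i)" "w 1 = (\<Sum>i\<le>1. \<gamma> (1 - i) *s u i)"
    using T d unfolding toeplitz_transition_def by blast+
  then have w0: "w 0 = u 0" and w1: "w 1 = \<gamma> 1 *s u 0 + u 1" using one by (simp_all add: atMost_Suc)
  have "u 1 = (\<Sum>i\<le>1. \<gamma>' (1 - i) *s w i)" using T' d unfolding toeplitz_transition_def by blast
  then have "u 1 = \<gamma>' 1 *s w 0 + w 1" using one by (simp add: atMost_Suc)
  then have "u 1 = (\<gamma>' 1 + \<gamma> 1) *s u 0 + u 1" using w0 w1 by (simp add: vec.scale_left_distrib ac_simps)
  then have "(\<gamma>' 1 + \<gamma> 1) *s u 0 = 0" by simp
  then have "\<gamma>' 1 + \<gamma> 1 = 0 \<or> u 0 = 0" by (simp only: vec.scale_eq_0_iff)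
  then show ?thesis using indexed_basis.basis_nonzero[OF u, of 0] by (simp add: eq_neg_iff_add_eq_0)
qed

lemma lr_pair_lr_chain:
  "lr_pair d X Y \<Longrightarrow> e \<in> lr_decomp d X Y d \<Longrightarrow> e \<noteq> 0 \<Longrightarrow> lr_chain d (lower_chain d X e) X Y (lr_param d X Y)"
  by (rule lr_chainI[OF lr_pair_lowering_chain lr_pair_raising_chain])

lemma lr_pair_compatible_top:
  assumes pair: "lr_pair d X Z" and u: "lowering_chain d u X"
  obtains e where "e \<in> lr_decomp d X Z d" "e \<noteq> 0" "coord d u e d = 1"
proof -
  obtain e where e: "e \<in> lr_decomp d X Z d" "e \<noteq> 0" using lr_pair_top_nonzero[OF pair] .
  define c where "c = coord d u e d"
  have c: "c \<noteq> 0"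
    using lowering_chain.coord_top_nonzero[OF u lr_pair_lowering_chain[OF pair e]] unfolding c_def by simp
  show thesis
  proof (rule that)
    show "inverse c *s e \<in> lr_decomp d X Z d"
      using e is_decompD(1)[OF lr_pair_decomp(1)[OF pair] order_refl] by (simp add: vec.subspace_scale)
    show "inverse c *s e \<noteq> 0" using e c by simp
    show "coord d u (inverse c *s e) d = 1"
      using c unfolding c_def by (simp add: indexed_basis.coord_scale[OF lowering_chain.axioms(1)[OF u]])
  qed
qed

lemma lr_triple_chains_exist:
  fixes A B C :: "'a::field^'n^'n"
  assumes tr: "lr_triple d A B C" and d: "1 \<le> d"
  obtains u z w \<gamma> where
    "lr_triple_chains d u A B (lr_param d A B) z C (lr_param d B C) w (lr_param d A C) \<gamma>"
    "trans_params d A B C 1 = \<gamma> 1" "trans_params d A C B 1 = - \<gamma> 1"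
    "\<And>i. i \<le> d \<Longrightarrow> a_seq d A B C i = coord d u (C *v u i) i"
proof -
  have AB: "lr_pair d A B" and BC: "lr_pair d B C" and CA: "lr_pair d C A"
    using tr unfolding lr_triple_def by auto
  have AC: "lr_pair d A C" by (rule lr_pair_swap(1)[OF CA])
  obtain e1 where e1: "e1 \<in> lr_decomp d A B d" "e1 \<noteq> 0" using lr_pair_top_nonzero[OF AB] .
  obtain e2 where e2: "e2 \<in> lr_decomp d B C d" "e2 \<noteq> 0" using lr_pair_top_nonzero[OF BC] .
  define u where "u = lower_chain d A e1"
  interpret u: lr_chain d u A B "lr_param d A B" unfolding u_def by (rule lr_pair_lr_chain[OF AB e1])
  obtain e3 where e3: "e3 \<in> lr_decomp d A C d" "e3 \<noteq> 0" and top: "coord d u e3 d = 1"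
    using lr_pair_compatible_top[OF AC u.lowering_chain_axioms] .
  define w where "w = lower_chain d A e3"
  have w: "lr_chain d w A C (lr_param d A C)" unfolding w_def by (rule lr_pair_lr_chain[OF AC e3])
  have T: "toeplitz_transition d u w (toeplitz_coeffs d u w)"
    using toeplitz_transition_lowering_chains[OF u.lowering_chain_axioms lr_chain.axioms(1)[OF w]] top
    unfolding w_def by simp
  have T': "toeplitz_transition d w u (toeplitz_coeffs d w u)"
    using toeplitz_transition_lowering_chains[OF lr_chain.axioms(1)[OF w] u.lowering_chain_axioms]
      toeplitz_transition_swap_top[OF u.lowering_chain_axioms lr_chain.axioms(1)[OF w] T] by blast
  have "lr_triple_chains d u A B (lr_param d A B) (lower_chain d B e2) C (lr_param d B C)
      w (lr_param d A C) (toeplitz_coeffs d u w)"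
    using u.lr_chain_axioms lr_pair_lr_chain[OF BC e2] w T
    by (intro lr_triple_chains.intro lr_triple_chains_axioms.intro)
  then show thesis
  proof (rule that)
    show "trans_params d A B C 1 = toeplitz_coeffs d u w 1"
      using trans_params_lower_chains[OF AB AC e1 e3] T unfolding u_def w_def by simp
    have "trans_params d A C B = toeplitz_coeffs d w u"
      using trans_params_lower_chains[OF AC AB e3 e1] T' unfolding u_def w_def by simp
    then show "trans_params d A C B 1 = - toeplitz_coeffs d u w 1"
      using toeplitz_transition_inverse_1[OF u.indexed_basis_axioms T T' d] by simp
    show "a_seq d A B C i = coord d u (C *v u i) i" if "i \<le> d" for i
      using a_seq_lower_chain[OF AB e1 that] unfolding u_def .
  qed
qed

section \<open>Uniqueness of LR triples\<close>

context lr_triple_chains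
begin

lemma coord_third_first: "1 \<le> d \<Longrightarrow> coord d u (C *v u 0) 0 = \<gamma> 1 * \<psi> 1"
  using coord_third[of 0 0] by (simp add: lr_third_entry_def param_ext_def)

lemma coord_third_last: "1 \<le> d \<Longrightarrow> coord d u (C *v u d) d = - (\<gamma> 1 * \<psi> d)"
  using coord_third[of d d] by (simp add: lr_third_entry_def param_ext_def)

end

lemma lr_triple_chains_iso:
  assumes T: "lr_triple_chains d u A B \<phi> z C \<phi>' w \<psi> \<gamma>"
    and T': "lr_triple_chains d u' A' B' \<phi>\<^sub>2 z' C' \<phi>\<^sub>2' w' \<psi>\<^sub>2 \<gamma>\<^sub>2"
    and params: "\<And>i. 1 \<le> i \<Longrightarrow> i \<le> d \<Longrightarrow> \<phi> i = \<phi>\<^sub>2 i \<and> \<phi>' i = \<phi>\<^sub>2' i \<and> \<psi> i = \<psi>\<^sub>2 i"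
    and scalar: "\<gamma> 1 = \<gamma>\<^sub>2 1"
  shows "lr_triple_iso A B C A' B' C'"
proof -
  interpret T: lr_triple_chains d u A B \<phi> z C \<phi>' w \<psi> \<gamma> by (rule T)
  interpret T': lr_triple_chains d u' A' B' \<phi>\<^sub>2 z' C' \<phi>\<^sub>2' w' \<psi>\<^sub>2 \<gamma>\<^sub>2 by (rule T')
  have "param_ext d \<psi> = param_ext d \<psi>\<^sub>2" using params by (auto simp: param_ext_def)
  then have "lr_third_entry d \<phi> \<phi>' \<psi> (\<gamma> 1) k j = lr_third_entry d \<phi>\<^sub>2 \<phi>\<^sub>2' \<psi>\<^sub>2 (\<gamma>\<^sub>2 1) k j"
    if "k \<le> d" for k j
    using that params[of k] params[of "d + 1 - k"] scalar by (auto simp: lr_third_entry_def)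
  then show ?thesis
    using T.u.coord_lower_basis T'.u.coord_lower_basis T.u.coord_raise_basis T'.u.coord_raise_basis
      T.coord_third T'.coord_third params
    by (intro lr_triple_iso_of_same_coords[OF T.u.indexed_basis_axioms T'.u.indexed_basis_axioms])
      (auto simp: Suc_le_eq)
qed

lemma lr_triple_rotate: "lr_triple d A B C \<Longrightarrow> lr_triple d B C A"
  unfolding lr_triple_def by blast

lemma same_param_array_rotate:
  "same_param_array d A B C A' B' C' \<Longrightarrow> same_param_array d B C A B' C' A'"
  unfolding same_param_array_def by blast

lemma lr_triple_iso_rotate: "lr_triple_iso B C A B' C' A' \<Longrightarrow> lr_triple_iso A B C A' B' C'"
  unfolding lr_triple_iso_def by blast

lemma same_param_array_swap:
  assumes "lr_triple d A B C" "lr_triple d A' B' C'" "same_param_array d A B C A' B' C'"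
    and "1 \<le> s" "s \<le> d"
  shows "lr_param d A C s = lr_param d A' C' s"
proof -
  have "1 \<le> d + 1 - s" "d + 1 - s \<le> d" using assms(4,5) by auto
  then have "lr_param d C A (d + 1 - s) = lr_param d C' A' (d + 1 - s)"
    using assms(3) unfolding same_param_array_def by blast
  then show ?thesis
    using assms(1,2,4,5) lr_param_swap[of d C A s] lr_param_swap[of d C' A' s]
    unfolding lr_triple_def by simp
qed

lemma lr_triple_iso_of_first_scalars:
  fixes A B C A' B' C' :: "'a::field^'n^'n"
  assumes tr: "lr_triple d A B C" and tr': "lr_triple d A' B' C'" and d: "1 \<le> d"
    and same: "same_param_array d A B C A' B' C'"
    and scalar: "a_seq d A B C 0 = a_seq d A' B' C' 0 \<or> a_seq d A B C d = a_seq d A' B' C' d \<or>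
      trans_params d A B C 1 = trans_params d A' B' C' 1 \<or> trans_params d A C B 1 = trans_params d A' C' B' 1"
  shows "lr_triple_iso A B C A' B' C'"
proof -
  obtain u z w \<gamma> where T: "lr_triple_chains d u A B (lr_param d A B) z C (lr_param d B C) w (lr_param d A C) \<gamma>"
    and \<beta>: "trans_params d A B C 1 = \<gamma> 1" and \<alpha>: "trans_params d A C B 1 = - \<gamma> 1"
    and a: "\<And>i. i \<le> d \<Longrightarrow> a_seq d A B C i = coord d u (C *v u i) i"
    using lr_triple_chains_exist[OF tr d] by blast
  obtain u' z' w' \<gamma>' where T': "lr_triple_chains d u' A' B' (lr_param d A' B') z' C' (lr_param d B' C') w'
      (lr_param d A' C') \<gamma>'"
    and \<beta>': "trans_params d A' B' C' 1 = \<gamma>' 1" and \<alpha>': "trans_params d A' C' B' 1 = - \<gamma>' 1"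
    and a': "\<And>i. i \<le> d \<Longrightarrow> a_seq d A' B' C' i = coord d u' (C' *v u' i) i"
    using lr_triple_chains_exist[OF tr' d] by blast
  have AC: "lr_param d A C s = lr_param d A' C' s" if "1 \<le> s" "s \<le> d" for s
    using same_param_array_swap[OF tr tr' same that] .
  have "lr_param d A C 1 \<noteq> 0" "lr_param d A C d \<noteq> 0"
    using raising_chain.param_nonzero[OF lr_chain.axioms(2)[OF lr_triple_chains.axioms(3)[OF T]]] d by auto
  then have "\<gamma> 1 = \<gamma>' 1"
    using scalar a[of 0] a'[of 0] a[of d] a'[of d] \<alpha> \<alpha>' \<beta> \<beta>' AC[of 1] AC[of d] d
      lr_triple_chains.coord_third_first[OF T d] lr_triple_chains.coord_third_first[OF T' d]
      lr_triple_chains.coord_third_last[OF T d] lr_triple_chains.coord_third_last[OF T' d]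
    by auto
  then show ?thesis
    using lr_triple_chains_iso[OF T T'] AC same unfolding same_param_array_def by blast
qed

theorem proposition15p8:
  fixes A B C A' B' C' :: "'a::field^'n^'n" and d :: nat
  assumes "CARD('n) = d + 1"
    and "d \<ge> 1"
    and "lr_triple d A B C"
    and "lr_triple d A' B' C'"
    and "same_param_array d A B C A' B' C'"
    and "a_seq d A B C 0 = a_seq d A' B' C' 0 \<or>
         a'_seq d A B C 0 = a'_seq d A' B' C' 0 \<or>
         a''_seq d A B C 0 = a''_seq d A' B' C' 0 \<or>
         a_seq d A B C d = a_seq d A' B' C' d \<or>
         a'_seq d A B C d = a'_seq d A' B' C' d \<or>
         a''_seq d A B C d = a''_seq d A' B' C' d \<or>
         alpha d A B C 1 = alpha d A' B' C' 1 \<or>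
         alpha' d A B C 1 = alpha' d A' B' C' 1 \<or>
         alpha'' d A B C 1 = alpha'' d A' B' C' 1 \<or>
         beta d A B C 1 = beta d A' B' C' 1 \<or>
         beta' d A B C 1 = beta' d A' B' C' 1 \<or>
         beta'' d A B C 1 = beta'' d A' B' C' 1"
  shows "lr_triple_iso A B C A' B' C'"
proof -
  note rotate = lr_triple_rotate same_param_array_rotate
  note by_ABC = lr_triple_iso_of_first_scalars[OF assms(3,4,2,5)]
  note by_BCA = lr_triple_iso_of_first_scalars[OF rotate(1)[OF assms(3)] rotate(1)[OF assms(4)] assms(2)
      rotate(2)[OF assms(5)], THEN lr_triple_iso_rotate]
  note by_CAB = lr_triple_iso_of_first_scalars[OF rotate(1)[OF rotate(1)[OF assms(3)]]
      rotate(1)[OF rotate(1)[OF assms(4)]] assms(2) rotate(2)[OF rotate(2)[OF assms(5)]],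
      THEN lr_triple_iso_rotate, THEN lr_triple_iso_rotate]
  show ?thesis
    using assms(6) by_ABC by_BCA by_CAB
    unfolding a_seq_def a'_seq_def a''_seq_def alpha_def alpha'_def alpha''_def beta_def beta'_def beta''_def
    by blast
qed

end
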